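(* Let $1<q<\infty$ and let $M\in\mathcal C^2$ be an Orlicz function with $M(0)=0=M'(0)$ such that $\lim_{t\to0^+}M''(t)/t^{q-2}$ exists (in $\overline{\mathbb R}$) and there is a constant $C>0$ with \[ \int_0^s\frac{M(t)}{t^{q+1}}\,\mathrm dt\leq C\,\frac{M(s)}{s^q}\qquad\text{for all }0<s\leq M^{-1}(1). \] Then \[ \lim_{t\to0^+}\frac{M(t)}{t^q}=\lim_{t\to0^+}\frac{M'(t)}{t^{q-1}}=\lim_{t\to0^+}\frac{M''(t)}{t^{q-2}}=0. \]
   Context: An Orlicz function is a convex function $M:[0,\infty)\to[0,\infty)$ with $M(0)=0$ and $M(t)>0$ for $t>0$. *)

theory Defs
  imports "HOL-Analysis.Analysis" "HOL-Library.Extended_Real"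
begin

definition orlicz_function :: "(real \<Rightarrow> real) \<Rightarrow> bool" where
  "orlicz_function M \<longleftrightarrow> convex_on {0..} M \<and> M 0 = 0 \<and> (\<forall>t>0. M t > 0)"

end

theory Submission
  imports Defs
begin

text \<open>
  Two applications of L'Hopital's rule show that M''(t)/t^(q-2), (q-1) M'(t)/t^(q-1) and
  q(q-1) M(t)/t^q have the same limit L in the extended reals as t tends to 0+, and L \<ge> 0 because
  M is positive. If L > 0, then M(t) \<ge> c t^q near 0, so the integral of M(t)/t^(q+1) over (0, s]
  dominates c times that of 1/t and is infinite, whereas the integral condition makes it finite
  for small s. Hence L = 0.
\<close>

lemma has_real_derivative_at_if_within_Ici:
  assumes "(f has_real_derivative D) (at t within {a..})" "a < t"
  shows "(f has_real_derivative D) (at t)"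
proof -
  have "at t within {a..} = at t"
    using assms(2) by (intro at_within_interior) simp
  then show ?thesis
    using assms(1) by simp
qed

lemma tendsto_at_right_if_has_real_derivative_within_Ici:
  assumes "(f has_real_derivative D) (at a within {a..})"
  shows "(f \<longlongrightarrow> f a) (at_right a)"
proof -
  have "(f \<longlongrightarrow> f a) (at a within {a..})"
    using DERIV_continuous[OF assms] by (simp add: continuous_within)
  then show ?thesis
    by (rule tendsto_within_subset) auto
qed

lemma tendsto_ereal_powr_ratio_lhopital:
  fixes F F' :: "real \<Rightarrow> real"
  assumes r: "0 < r" and F0: "(F \<longlongrightarrow> 0) (at_right 0)"
    and F': "\<And>t. 0 < t \<Longrightarrow> (F has_real_derivative F' t) (at t)"
    and lim: "((\<lambda>t. ereal (F' t / t powr (r - 1))) \<longlongrightarrow> L) (at_right 0)"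
  shows "((\<lambda>t. ereal (r * F t / t powr r)) \<longlongrightarrow> L) (at_right 0)"
proof -
  have pos: "\<forall>\<^sub>F t in at_right 0. (0::real) < t"
    by (rule eventually_at_right_less)
  have "filterlim (\<lambda>t. r * F t / t powr r) (filtercomap ereal (nhds L)) (at_right 0)"
  proof (rule lhopital_right_0)
    show "((\<lambda>t. r * F t) \<longlongrightarrow> 0) (at_right 0)"
      by (rule tendsto_mult_right_zero[OF F0])
    have "\<forall>\<^sub>F t in at_right 0. (0::real) \<le> t"
      using pos by eventually_elim simp
    then show "((\<lambda>t. t powr r) \<longlongrightarrow> 0) (at_right 0)"
      using tendsto_zero_powrI[OF tendsto_ident_at tendsto_const _ r] by blast
    show "\<forall>\<^sub>F t in at_right 0. t powr r \<noteq> 0"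
      using pos by eventually_elim simp
    show "\<forall>\<^sub>F t in at_right 0. r * t powr (r - 1) \<noteq> 0"
      using pos by eventually_elim (use r in simp)
    show "\<forall>\<^sub>F t in at_right 0. ((\<lambda>t. r * F t) has_real_derivative r * F' t) (at t)"
      using pos by eventually_elim (rule DERIV_cmult[OF F'])
    show "\<forall>\<^sub>F t in at_right 0. ((\<lambda>t. t powr r) has_real_derivative r * t powr (r - 1)) (at t)"
      using pos by eventually_elim (rule has_real_derivative_powr)
    have "(\<lambda>t. r * F' t / (r * t powr (r - 1))) = (\<lambda>t. F' t / t powr (r - 1))"
      using r by simp
    then show "filterlim (\<lambda>t. r * F' t / (r * t powr (r - 1))) (filtercomap ereal (nhds L)) (at_right 0)"
      using lim by (simp only: filterlim_filtercomap_iff comp_def)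
  qed
  then show ?thesis
    by (simp only: filterlim_filtercomap_iff comp_def)
qed

lemma tendsto_ereal_powr_ratios_lhopital_twice:
  fixes F F' F'' :: "real \<Rightarrow> real"
  assumes q: "1 < q"
    and F0: "(F \<longlongrightarrow> 0) (at_right 0)" and F'0: "(F' \<longlongrightarrow> 0) (at_right 0)"
    and F': "\<And>t. 0 < t \<Longrightarrow> (F has_real_derivative F' t) (at t)"
    and F'': "\<And>t. 0 < t \<Longrightarrow> (F' has_real_derivative F'' t) (at t)"
    and lim: "((\<lambda>t. ereal (F'' t / t powr (q - 2))) \<longlongrightarrow> L) (at_right 0)"
  shows "((\<lambda>t. ereal ((q - 1) * (F' t / t powr (q - 1)))) \<longlongrightarrow> L) (at_right 0)"
    and "((\<lambda>t. ereal (q * (q - 1) * (F t / t powr q))) \<longlongrightarrow> L) (at_right 0)"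
proof -
  have "((\<lambda>t. ereal (F'' t / t powr (q - 1 - 1))) \<longlongrightarrow> L) (at_right 0)"
    using lim by (simp add: diff_diff_eq)
  then have lim': "((\<lambda>t. ereal ((q - 1) * F' t / t powr (q - 1))) \<longlongrightarrow> L) (at_right 0)"
    using q F'0 F'' by (intro tendsto_ereal_powr_ratio_lhopital) auto
  then show "((\<lambda>t. ereal ((q - 1) * (F' t / t powr (q - 1)))) \<longlongrightarrow> L) (at_right 0)"
    by (simp only: times_divide_eq_right)
  have "((\<lambda>t. ereal (q * ((q - 1) * F t) / t powr q)) \<longlongrightarrow> L) (at_right 0)"
  proof (rule tendsto_ereal_powr_ratio_lhopital[OF _ tendsto_mult_right_zero[OF F0] _ lim'])
    show "((\<lambda>t. (q - 1) * F t) has_real_derivative (q - 1) * F' t) (at t)" if "0 < t" for t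
      using that by (intro DERIV_cmult F')
  qed (use q in simp)
  then show "((\<lambda>t. ereal (q * (q - 1) * (F t / t powr q))) \<longlongrightarrow> L) (at_right 0)"
    by (simp only: times_divide_eq_right mult.assoc)
qed

lemma nn_integral_Ioc_divide_eq_infinity:
  fixes c s :: real
  assumes c: "0 < c" and s: "0 < s"
  shows "(\<integral>\<^sup>+ t\<in>{0<..s}. ennreal (c / t) \<partial>lborel) = \<infinity>"
proof (cases "\<integral>\<^sup>+ t\<in>{0<..s}. ennreal (c / t) \<partial>lborel")
  case (real K)
  \<comment> \<open>chosen so that the integral of c/t over [e, s] equals K + c\<close>
  define e where "e = s * exp (- (K / c + 1))"
  have "exp (- (K / c + 1)) \<le> 1"
    using divide_nonneg_pos[OF real(1) c] by simp
  then have e: "0 < e" "e \<le> s"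
    using s by (simp_all add: e_def mult_le_cancel_left2)
  have FTC: "(\<integral>\<^sup>+ t. ennreal (c / t) * indicator {e..s} t \<partial>lborel) = ennreal (c * ln s - c * ln e)"
  proof (rule nn_integral_FTC_Icc)
    show "(\<lambda>t. c / t) \<in> borel_measurable borel"
      by measurable
    show "((\<lambda>t. c * ln t) has_real_derivative c / t) (at t)" if "t \<in> {e..s}" for t
      using that e DERIV_cmult[OF DERIV_ln_divide, of t c] by simp
  qed (use e c in auto)
  have "c * ln s - c * ln e = K + c"
    using s c by (simp add: e_def ln_mult algebra_simps)
  then have "ennreal (K + c) = (\<integral>\<^sup>+ t. ennreal (c / t) * indicator {e..s} t \<partial>lborel)"
    by (simp only: FTC)
  also have "\<dots> \<le> (\<integral>\<^sup>+ t\<in>{0<..s}. ennreal (c / t) \<partial>lborel)"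
    using e by (intro nn_integral_mono) (simp split: split_indicator)
  also have "\<dots> = ennreal K"
    by (rule real(2))
  finally have "K + c \<le> K"
    using real(1) c by simp
  then show ?thesis
    using c by simp
qed simp

lemma powr_ratio_limit_nonpos_if_nn_integral_finite:
  fixes F :: "real \<Rightarrow> real" and c q :: real
  assumes c: "0 < c"
    and lim: "((\<lambda>t. ereal (c * (F t / t powr q))) \<longlongrightarrow> L) (at_right 0)"
    and fin: "\<forall>\<^sub>F s in at_right 0. (\<integral>\<^sup>+ t\<in>{0<..s}. ennreal (F t / t powr (q + 1)) \<partial>lborel) < \<infinity>"
  shows "L \<le> 0"
proof (rule ccontr)
  assume "\<not> L \<le> 0"
  then have "0 < L"
    by (simp add: not_le)
  then obtain z where z: "0 < z" "ereal z < L"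
    using ereal_dense2[of 0 L] by auto
  obtain b where b: "0 < b" and near: "\<And>t. 0 < t \<Longrightarrow> t < b \<Longrightarrow>
      ereal z < ereal (c * (F t / t powr q)) \<and> (\<integral>\<^sup>+ u\<in>{0<..t}. ennreal (F u / u powr (q + 1)) \<partial>lborel) < \<infinity>"
    using eventually_conj[OF order_tendstoD(1)[OF lim z(2)] fin]
    unfolding eventually_at_right_field by blast
  define s where "s = b / 2"
  have s: "0 < s" "s < b"
    using b by (auto simp: s_def)
  have "z / c / t \<le> F t / t powr (q + 1)" if t: "0 < t" "t \<le> s" for t
  proof -
    have tq: "0 < t powr q"
      using t by simp
    have "z < c * (F t / t powr q)"
      using near[of t] t s by simp
    then have "z / c * t powr q \<le> F t"
      using c tq by (simp add: pos_less_divide_eq pos_divide_le_eq mult.commute)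
    then have "z / c * t powr q / t powr (q + 1) \<le> F t / t powr (q + 1)"
      by (rule divide_right_mono) simp
    then show ?thesis
      using t by (simp add: powr_add)
  qed
  then have "(\<integral>\<^sup>+ t\<in>{0<..s}. ennreal (z / c / t) \<partial>lborel)
      \<le> (\<integral>\<^sup>+ t\<in>{0<..s}. ennreal (F t / t powr (q + 1)) \<partial>lborel)"
    by (intro nn_integral_mono) (auto intro: ennreal_leI split: split_indicator)
  moreover have "(\<integral>\<^sup>+ t\<in>{0<..s}. ennreal (z / c / t) \<partial>lborel) = \<infinity>"
    using z c s by (intro nn_integral_Ioc_divide_eq_infinity) auto
  ultimately have "\<not> (\<integral>\<^sup>+ t\<in>{0<..s}. ennreal (F t / t powr (q + 1)) \<partial>lborel) < \<infinity>"
    by (simp add: not_less)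
  then show False
    using near[OF s] by simp
qed

lemma tendsto_zero_if_ereal_cmult_tendsto_zero:
  fixes f :: "'a \<Rightarrow> real"
  assumes "c \<noteq> 0" and "((\<lambda>x. ereal (c * f x)) \<longlongrightarrow> 0) F"
  shows "(f \<longlongrightarrow> 0) F"
proof -
  have "((\<lambda>x. c * f x) \<longlongrightarrow> 0) F"
    using assms(2) by (simp add: zero_ereal_def)
  then have "((\<lambda>x. c * f x / c) \<longlongrightarrow> 0) F"
    by (rule tendsto_divide_zero)
  then show ?thesis
    using assms(1) by simp
qed

theorem lemma3p2:
  fixes M M' M'' :: "real \<Rightarrow> real" and q C :: real
  assumes q: "1 < q"
    and orl: "orlicz_function M"
    and dM: "\<And>t. t \<ge> 0 \<Longrightarrow> (M has_real_derivative M' t) (at t within {0..})"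
    and dM': "\<And>t. t \<ge> 0 \<Longrightarrow> (M' has_real_derivative M'' t) (at t within {0..})"
    and contM'': "continuous_on {0..} M''"
    and M'0: "M' 0 = 0"
    and lim2: "\<exists>L::ereal. ((\<lambda>t. ereal (M'' t / t powr (q - 2))) \<longlongrightarrow> L) (at_right 0)"
    and Cpos: "C > 0"
    and intcond: "\<And>s. 0 < s \<Longrightarrow> M s \<le> 1 \<Longrightarrow>
        (\<integral>\<^sup>+ t\<in>{0<..s}. ennreal (M t / t powr (q + 1)) \<partial>lborel) \<le> ennreal (C * M s / s powr q)"
  shows "((\<lambda>t. M t / t powr q) \<longlongrightarrow> 0) (at_right 0)
       \<and> ((\<lambda>t. M' t / t powr (q - 1)) \<longlongrightarrow> 0) (at_right 0)
       \<and> ((\<lambda>t. M'' t / t powr (q - 2)) \<longlongrightarrow> 0) (at_right 0)"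
proof -
  have M0: "M 0 = 0" and Mpos: "\<And>t. 0 < t \<Longrightarrow> 0 < M t"
    using orl unfolding orlicz_function_def by auto
  have M_to_0: "(M \<longlongrightarrow> 0) (at_right 0)" and M'_to_0: "(M' \<longlongrightarrow> 0) (at_right 0)"
    using tendsto_at_right_if_has_real_derivative_within_Ici[OF dM] M0
      tendsto_at_right_if_has_real_derivative_within_Ici[OF dM'] M'0 by simp_all
  obtain L where L: "((\<lambda>t. ereal (M'' t / t powr (q - 2))) \<longlongrightarrow> L) (at_right 0)"
    using lim2 by blast
  have dM_at: "\<And>t. 0 < t \<Longrightarrow> (M has_real_derivative M' t) (at t)"
    and dM'_at: "\<And>t. 0 < t \<Longrightarrow> (M' has_real_derivative M'' t) (at t)"
    using has_real_derivative_at_if_within_Ici[OF dM] has_real_derivative_at_if_within_Ici[OF dM']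
    by simp_all
  have LM': "((\<lambda>t. ereal ((q - 1) * (M' t / t powr (q - 1)))) \<longlongrightarrow> L) (at_right 0)"
    and LM: "((\<lambda>t. ereal (q * (q - 1) * (M t / t powr q))) \<longlongrightarrow> L) (at_right 0)"
    using tendsto_ereal_powr_ratios_lhopital_twice[OF q M_to_0 M'_to_0 dM_at dM'_at L] by simp_all
  have fin: "\<forall>\<^sub>F s in at_right 0. (\<integral>\<^sup>+ t\<in>{0<..s}. ennreal (M t / t powr (q + 1)) \<partial>lborel) < \<infinity>"
    using order_tendstoD(2)[OF M_to_0 zero_less_one, THEN eventually_conj, OF eventually_at_right_less]
  proof eventually_elim
    case (elim s)
    then show ?case
      using le_less_trans[OF intcond[of s] ennreal_less_top] by simp
  qed
  have "0 \<le> L"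
  proof (rule tendsto_lowerbound[OF LM])
    show "\<forall>\<^sub>F t in at_right 0. 0 \<le> ereal (q * (q - 1) * (M t / t powr q))"
      using q Mpos by (intro eventually_at_rightI[of 0 1]) (simp_all add: less_imp_le)
  qed simp
  moreover have "L \<le> 0"
    using q by (intro powr_ratio_limit_nonpos_if_nn_integral_finite[OF _ LM fin]) simp
  ultimately have "L = 0"
    by simp
  have "((\<lambda>t. M t / t powr q) \<longlongrightarrow> 0) (at_right 0)"
    using q LM \<open>L = 0\<close> by (intro tendsto_zero_if_ereal_cmult_tendsto_zero[of "q * (q - 1)"]) simp_all
  moreover have "((\<lambda>t. M' t / t powr (q - 1)) \<longlongrightarrow> 0) (at_right 0)"
    using q LM' \<open>L = 0\<close> by (intro tendsto_zero_if_ereal_cmult_tendsto_zero[of "q - 1"]) simp_all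
  moreover have "((\<lambda>t. M'' t / t powr (q - 2)) \<longlongrightarrow> 0) (at_right 0)"
    using L \<open>L = 0\<close> by (simp add: zero_ereal_def)
  ultimately show ?thesis
    by (intro conjI)
qed

end
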